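(* Let $L,L'$ be finite simplicial complexes and $\varphi: L\to L'$ a bijective simplicial finite-fibration. Then $$\mathrm{scat}(\varphi)\le\mathrm{scat}(L)\le\mathrm{TC}(\varphi)\le\mathrm{TC}(L)\le\mathrm{scat}(L\times L).$$
   Context: Simplicial complexes are abstract and edge-path connected; $K\times K'$ is the categorical product (vertex set $\mathrm{VX}(K)\times\mathrm{VX}(K')$; a set of vertices is a simplex iff both projections are simplices). Simplicial maps $f,g: K\to K'$ are contiguous if $f(\sigma)\cup g(\sigma)$ is a simplex for every simplex $\sigma$; $f\sim g$ if joined by a finite chain of contiguous simplicial maps. $\mathrm{SD}(\varphi_1,\varphi_2)$ for simplicial maps $K\to K'$ is the least $k\ge0$ such that $K$ is a union of subcomplexes $K_0,\dots,K_k$ with $\varphi_1|_{K_j}\sim\varphi_2|_{K_j}$ for all $j$. With $p_1,p_2: L\times L\to L$ the projections, $\mathrm{TC}(L)=\mathrm{SD}(p_1,p_2)$. For a complex $K$, a vertex $v_0$ of $K$ and constant map $c_{v_0}: K\to K$: $\mathrm{scat}(K)=\mathrm{SD}(1_K,c_{v_0})$; for $\varphi: L\to L'$, $\mathrm{scat}(\varphi)=\mathrm{SD}(\varphi,\varphi\circ c_{v_0})$. $I_m$ is the complex with vertices $0,\dots,m$ and edges $\{i,i+1\}$; $\varphi$ is a simplicial finite-fibration if for every finite complex $N$, $m\ge1$, inclusion $i: N\times\{0\}\to N\times I_m$ and simplicial $g: N\times\{0\}\to L$, $G: N\times I_m\to L'$ with $\varphi\circ g=G\circ i$, there is simplicial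 $\widetilde G$ with $\widetilde G\circ i=g$, $\varphi\circ\widetilde G=G$. $\mathrm{TC}(\varphi)$ is the simplicial Schwarz genus of $\pi_\varphi: L^I\to L\times L'$, $\delta\mapsto(\delta(0),\varphi(\delta(1)))$, where $L^I$ is the simplicial path complex of $L$; the simplicial Schwarz genus of $p: E\to B$ is the least $k\ge0$ such that $B$ is a union of subcomplexes $B_0,\dots,B_k$ each admitting a simplicial $s: B_j\to E$ with $p\circ s$ the inclusion. *)

theory Defs
  imports Main "HOL-Library.Extended_Nat"
begin

definition simplicial_complex :: "'a set set \<Rightarrow> bool" where
  "simplicial_complex K \<longleftrightarrow>
     (\<forall>\<sigma>\<in>K. \<sigma> \<noteq> {} \<and> finite \<sigma> \<and> (\<forall>\<tau>. \<tau> \<subseteq> \<sigma> \<and> \<tau> \<noteq> {} \<longrightarrow> \<tau> \<in> K))"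

definition vertices :: "'a set set \<Rightarrow> 'a set" where
  "vertices K = \<Union>K"

definition edge_connected :: "'a set set \<Rightarrow> bool" where
  "edge_connected K \<longleftrightarrow>
     (\<forall>v\<in>vertices K. \<forall>w\<in>vertices K. (\<lambda>x y. {x, y} \<in> K)\<^sup>*\<^sup>* v w)"

text \<open>Standing convention: complexes are edge-path connected.\<close>
definition complex :: "'a set set \<Rightarrow> bool" where
  "complex K \<longleftrightarrow> simplicial_complex K \<and> edge_connected K"

definition finite_complex :: "'a set set \<Rightarrow> bool" where
  "finite_complex K \<longleftrightarrow> complex K \<and> finite (vertices K)"

definition subcomplex :: "'a set set \<Rightarrow> 'a set set \<Rightarrow> bool" where
  "subcomplex K0 K \<longleftrightarrow> K0 \<subseteq> K \<and> simplicial_complex K0"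

definition simplicial_map :: "'a set set \<Rightarrow> 'b set set \<Rightarrow> ('a \<Rightarrow> 'b) \<Rightarrow> bool" where
  "simplicial_map K K' f \<longleftrightarrow> (\<forall>\<sigma>\<in>K. f ` \<sigma> \<in> K')"

definition contiguous :: "'a set set \<Rightarrow> 'b set set \<Rightarrow> ('a \<Rightarrow> 'b) \<Rightarrow> ('a \<Rightarrow> 'b) \<Rightarrow> bool" where
  "contiguous K K' f g \<longleftrightarrow>
     simplicial_map K K' f \<and> simplicial_map K K' g \<and> (\<forall>\<sigma>\<in>K. f ` \<sigma> \<union> g ` \<sigma> \<in> K')"

definition contig_equiv :: "'a set set \<Rightarrow> 'b set set \<Rightarrow> ('a \<Rightarrow> 'b) \<Rightarrow> ('a \<Rightarrow> 'b) \<Rightarrow> bool" where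
  "contig_equiv K K' f g \<longleftrightarrow>
     (\<exists>(h :: nat \<Rightarrow> 'a \<Rightarrow> 'b) n. h 0 = f \<and> h n = g \<and>
        (\<forall>i\<le>n. simplicial_map K K' (h i)) \<and>
        (\<forall>i<n. contiguous K K' (h i) (h (Suc i))))"

text \<open>Simplicial distance (value \<open>\<infinity>\<close> if no such cover exists).\<close>
definition SD :: "'a set set \<Rightarrow> 'b set set \<Rightarrow> ('a \<Rightarrow> 'b) \<Rightarrow> ('a \<Rightarrow> 'b) \<Rightarrow> enat" where
  "SD K K' f g = Inf {enat k | k. \<exists>Ks :: nat \<Rightarrow> 'a set set.
       (\<forall>j\<le>k. subcomplex (Ks j) K \<and> contig_equiv (Ks j) K' f g) \<and>
       K = (\<Union>j\<le>k. Ks j)}"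

definition prod_complex :: "'a set set \<Rightarrow> 'b set set \<Rightarrow> ('a \<times> 'b) set set" (infixr "\<times>\<^sub>S" 80) where
  "K \<times>\<^sub>S K' = {\<tau>. \<tau> \<noteq> {} \<and> finite \<tau> \<and> fst ` \<tau> \<in> K \<and> snd ` \<tau> \<in> K'}"

definition TC :: "'a set set \<Rightarrow> enat" where
  "TC L = SD (L \<times>\<^sub>S L) L fst snd"

definition base_vertex :: "'a set set \<Rightarrow> 'a" where
  "base_vertex K = (SOME v. v \<in> vertices K)"

definition scat :: "'a set set \<Rightarrow> enat" where
  "scat K = SD K K id (\<lambda>_. base_vertex K)"

definition scat_map :: "'a set set \<Rightarrow> 'b set set \<Rightarrow> ('a \<Rightarrow> 'b) \<Rightarrow> enat" where
  "scat_map L L' \<phi> = SD L L' \<phi> (\<phi> \<circ> (\<lambda>_. base_vertex L))"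

definition interval_complex :: "nat \<Rightarrow> nat set set" where
  "interval_complex m = {{i} | i. i \<le> m} \<union> {{i, Suc i} | i. i < m}"

text \<open>Simplicial finite-fibration. Test complexes \<open>N\<close> are taken with vertices in \<open>nat\<close>
  (every finite complex is isomorphic to one of these).\<close>
definition finite_fibration :: "'a set set \<Rightarrow> 'b set set \<Rightarrow> ('a \<Rightarrow> 'b) \<Rightarrow> bool" where
  "finite_fibration L L' \<phi> \<longleftrightarrow> simplicial_map L L' \<phi> \<and>
     (\<forall>(N :: nat set set) m g G.
        finite_complex N \<and> m \<ge> 1 \<and>
        simplicial_map (N \<times>\<^sub>S {{0}}) L g \<and>
        simplicial_map (N \<times>\<^sub>S interval_complex m) L' G \<and>
        (\<forall>x\<in>vertices (N \<times>\<^sub>S {{0}}). \<phi> (g x) = G x)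
        \<longrightarrow> (\<exists>Gt. simplicial_map (N \<times>\<^sub>S interval_complex m) L Gt \<and>
                  (\<forall>x\<in>vertices (N \<times>\<^sub>S {{0}}). Gt x = g x) \<and>
                  (\<forall>x\<in>vertices (N \<times>\<^sub>S interval_complex m). \<phi> (Gt x) = G x)))"

text \<open>Simplicial path complex: paths are simplicial maps from the half-line
  (vertices \<open>nat\<close>, edges \<open>{i, i+1}\<close>) that are eventually constant (i.e. paths
  \<open>I_m \<rightarrow> L\<close> extended by constants); a finite nonempty set of paths is a simplex iff
  for every edge \<open>{i,i+1}\<close> the union of its images is a simplex of \<open>L\<close>
  (the exponential object for the categorical product).\<close>
definition is_path :: "'a set set \<Rightarrow> (nat \<Rightarrow> 'a) \<Rightarrow> bool" where
  "is_path L \<delta> \<longleftrightarrow> (\<forall>i. {\<delta> i, \<delta> (Suc i)} \<in> L) \<and> (\<exists>m. \<forall>i\<ge>m. \<delta> i = \<delta> m)"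

definition path_complex :: "'a set set \<Rightarrow> (nat \<Rightarrow> 'a) set set" where
  "path_complex L = {F. F \<noteq> {} \<and> finite F \<and> (\<forall>\<delta>\<in>F. is_path L \<delta>) \<and>
       (\<forall>i. (\<Union>\<delta>\<in>F. {\<delta> i, \<delta> (Suc i)}) \<in> L)}"

definition path_end :: "(nat \<Rightarrow> 'a) \<Rightarrow> 'a" where
  "path_end \<delta> = \<delta> (LEAST m. \<forall>i\<ge>m. \<delta> i = \<delta> m)"

definition pi_map :: "('a \<Rightarrow> 'b) \<Rightarrow> (nat \<Rightarrow> 'a) \<Rightarrow> 'a \<times> 'b" where
  "pi_map \<phi> \<delta> = (\<delta> 0, \<phi> (path_end \<delta>))"

definition schwarz_genus :: "'e set set \<Rightarrow> 'b set set \<Rightarrow> ('e \<Rightarrow> 'b) \<Rightarrow> enat" where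
  "schwarz_genus E B p = Inf {enat k | k. \<exists>Bs :: nat \<Rightarrow> 'b set set.
       (\<forall>j\<le>k. subcomplex (Bs j) B \<and>
          (\<exists>s. simplicial_map (Bs j) E s \<and> (\<forall>b\<in>vertices (Bs j). p (s b) = b))) \<and>
       B = (\<Union>j\<le>k. Bs j)}"

definition TC_map :: "'a set set \<Rightarrow> 'b set set \<Rightarrow> ('a \<Rightarrow> 'b) \<Rightarrow> enat" where
  "TC_map L L' \<phi> = schwarz_genus (path_complex L) (L \<times>\<^sub>S L') (pi_map \<phi>)"

end

theory Submission
  imports Defs
begin

(* All the invariants are covering numbers: the least k such that the complex is the union of
   k + 1 subcomplexes with some property.  Each inequality transports covers.

   scat(phi) <= scat(L) and TC(L) <= scat(L x L): a contiguity chain on a piece is composed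
   with phi, resp. with the two projections; edge-path connectivity joins the two coordinates
   of the base vertex.

   scat(L) <= TC(phi): pull a cover of L x L' back along x |-> (x, phi v0).  A section over a
   piece is a simplicial family of paths from x to a vertex over phi v0, which is v0 since phi
   is injective; evaluating these paths at the times 0, 1, 2, ... is a contiguity chain from
   the identity to the constant map.

   TC(phi) <= TC(L): pull a cover of L x L back along id x phi^-1.  A contiguity chain from fst
   to snd on a piece, read pointwise, is a simplicial family of paths, i.e. a section of pi_phi.
   The fibration property is needed only to make phi^-1 simplicial. *)

lemma vertices_iff: "v \<in> vertices K \<longleftrightarrow> (\<exists>\<sigma>\<in>K. v \<in> \<sigma>)"
  by (auto simp: vertices_def)

lemma simplex_subset_vertices: "\<sigma> \<in> K \<Longrightarrow> \<sigma> \<subseteq> vertices K"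
  by (auto simp: vertices_def)

lemma simplicial_complex_face:
  "simplicial_complex K \<Longrightarrow> \<sigma> \<in> K \<Longrightarrow> \<tau> \<subseteq> \<sigma> \<Longrightarrow> \<tau> \<noteq> {} \<Longrightarrow> \<tau> \<in> K"
  unfolding simplicial_complex_def by blast

lemma simplicial_complex_nonempty: "simplicial_complex K \<Longrightarrow> \<sigma> \<in> K \<Longrightarrow> \<sigma> \<noteq> {}"
  unfolding simplicial_complex_def by blast

lemma simplicial_complex_finite: "simplicial_complex K \<Longrightarrow> \<sigma> \<in> K \<Longrightarrow> finite \<sigma>"
  unfolding simplicial_complex_def by blast

lemma simplicial_complex_singleton: "simplicial_complex K \<Longrightarrow> v \<in> vertices K \<Longrightarrow> {v} \<in> K"
  unfolding vertices_iff using simplicial_complex_face[of K _ "{v}"] by blast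

lemma vertices_nonempty: "simplicial_complex K \<Longrightarrow> K \<noteq> {} \<Longrightarrow> vertices K \<noteq> {}"
  unfolding vertices_def using simplicial_complex_nonempty by blast

lemma base_vertex_in_vertices: "vertices K \<noteq> {} \<Longrightarrow> base_vertex K \<in> vertices K"
  unfolding base_vertex_def by (rule someI_ex) blast

lemma simplicial_map_vertex: "simplicial_map K K' f \<Longrightarrow> v \<in> vertices K \<Longrightarrow> f v \<in> vertices K'"
  unfolding simplicial_map_def vertices_iff by blast

lemma vertices_mono: "K0 \<subseteq> K \<Longrightarrow> vertices K0 \<subseteq> vertices K"
  unfolding vertices_def by blast

lemma simplicial_map_id: "simplicial_map K K id"
  by (simp add: simplicial_map_def)

lemma simplicial_map_const: "(\<And>\<sigma>. \<sigma> \<in> K \<Longrightarrow> \<sigma> \<noteq> {}) \<Longrightarrow> {a} \<in> K' \<Longrightarrow> simplicial_map K K' (\<lambda>_. a)"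
  unfolding simplicial_map_def by (simp add: image_constant_conv)

lemma simplicial_map_comp:
  "simplicial_map K K' f \<Longrightarrow> simplicial_map K' K'' g \<Longrightarrow> simplicial_map K K'' (g \<circ> f)"
  unfolding simplicial_map_def by (metis image_comp)

lemma image_simplex_cong:
  "(\<And>v. v \<in> vertices K \<Longrightarrow> f v = g v) \<Longrightarrow> \<sigma> \<in> K \<Longrightarrow> f ` \<sigma> = g ` \<sigma>"
  using simplex_subset_vertices by (metis image_cong subsetD)

lemma simplicial_map_cong:
  "simplicial_map K K' f \<Longrightarrow> (\<And>v. v \<in> vertices K \<Longrightarrow> f v = g v) \<Longrightarrow> simplicial_map K K' g"
  unfolding simplicial_map_def using image_simplex_cong by metis

lemma subcomplex_preimage:
  assumes K: "simplicial_complex K" and B: "subcomplex B K'"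
  shows "subcomplex {\<sigma> \<in> K. f ` \<sigma> \<in> B} K"
  unfolding subcomplex_def simplicial_complex_def
proof (intro conjI ballI allI impI)
  have scB: "simplicial_complex B" using B by (simp add: subcomplex_def)
  show "{\<sigma> \<in> K. f ` \<sigma> \<in> B} \<subseteq> K" by blast
  fix \<sigma> assume \<sigma>: "\<sigma> \<in> {\<sigma> \<in> K. f ` \<sigma> \<in> B}"
  then show "\<sigma> \<noteq> {}" "finite \<sigma>"
    using simplicial_complex_nonempty[OF K] simplicial_complex_finite[OF K] by auto
  fix \<tau> assume \<tau>: "\<tau> \<subseteq> \<sigma> \<and> \<tau> \<noteq> {}"
  then have "\<tau> \<in> K" using \<sigma> simplicial_complex_face[OF K] by blast
  moreover have "f ` \<tau> \<in> B"
    using \<sigma> \<tau> simplicial_complex_face[OF scB, of "f ` \<sigma>" "f ` \<tau>"] by blast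
  ultimately show "\<tau> \<in> {\<sigma> \<in> K. f ` \<sigma> \<in> B}" by blast
qed

lemma simplicial_complex_prod:
  assumes "simplicial_complex A" "simplicial_complex B"
  shows "simplicial_complex (A \<times>\<^sub>S B)"
  unfolding simplicial_complex_def prod_complex_def
  by (auto intro: simplicial_complex_face[OF assms(1)] simplicial_complex_face[OF assms(2)]
      image_mono finite_subset)

lemma vertices_prod_complex:
  assumes "simplicial_complex A" "simplicial_complex B"
  shows "vertices (A \<times>\<^sub>S B) = vertices A \<times> vertices B"
proof
  show "vertices (A \<times>\<^sub>S B) \<subseteq> vertices A \<times> vertices B"
  proof
    fix p assume "p \<in> vertices (A \<times>\<^sub>S B)"
    then obtain \<tau> where "\<tau> \<in> A \<times>\<^sub>S B" "p \<in> \<tau>" unfolding vertices_iff by blast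
    then have "fst p \<in> fst ` \<tau>" "fst ` \<tau> \<in> A" "snd p \<in> snd ` \<tau>" "snd ` \<tau> \<in> B"
      unfolding prod_complex_def by auto
    then show "p \<in> vertices A \<times> vertices B" unfolding mem_Times_iff vertices_iff by blast
  qed
  show "vertices A \<times> vertices B \<subseteq> vertices (A \<times>\<^sub>S B)"
  proof
    fix p assume "p \<in> vertices A \<times> vertices B"
    then have "{fst p} \<in> A" "{snd p} \<in> B"
      using simplicial_complex_singleton[OF assms(1)] simplicial_complex_singleton[OF assms(2)] by auto
    then have "{p} \<in> A \<times>\<^sub>S B" unfolding prod_complex_def by simp
    then show "p \<in> vertices (A \<times>\<^sub>S B)" unfolding vertices_iff by blast
  qed
qed

lemma simplicial_map_fst: "simplicial_map (A \<times>\<^sub>S B) A fst"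
  and simplicial_map_snd: "simplicial_map (A \<times>\<^sub>S B) B snd"
  unfolding simplicial_map_def prod_complex_def by auto

lemma simplicial_map_pair:
  assumes "simplicial_complex K" "simplicial_map K A f" "simplicial_map K B g"
  shows "simplicial_map K (A \<times>\<^sub>S B) (\<lambda>x. (f x, g x))"
  using assms simplicial_complex_nonempty simplicial_complex_finite
  unfolding simplicial_map_def prod_complex_def by (fastforce simp: image_image)

section \<open>Contiguity classes\<close>

lemma contiguous_refl: "simplicial_map K K' f \<Longrightarrow> contiguous K K' f f"
  by (simp add: contiguous_def simplicial_map_def)

lemma contiguous_sym: "contiguous K K' f g \<Longrightarrow> contiguous K K' g f"
  by (simp add: contiguous_def Un_commute)

lemma contiguous_if_agree:
  "simplicial_map K K' f \<Longrightarrow> (\<And>v. v \<in> vertices K \<Longrightarrow> f v = g v) \<Longrightarrow> contiguous K K' f g"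
  unfolding contiguous_def using simplicial_map_cong image_simplex_cong
  by (metis simplicial_map_def sup.idem)

lemma contiguous_comp:
  assumes "contiguous K K' f g" "simplicial_map K' K'' \<psi>"
  shows "contiguous K K'' (\<psi> \<circ> f) (\<psi> \<circ> g)"
proof -
  have "(\<psi> \<circ> f) ` \<sigma> \<union> (\<psi> \<circ> g) ` \<sigma> = \<psi> ` (f ` \<sigma> \<union> g ` \<sigma>)" for \<sigma>
    by (simp add: image_Un image_comp)
  with assms show ?thesis
    unfolding contiguous_def by (auto simp: simplicial_map_comp) (simp add: simplicial_map_def)
qed

lemma contig_equiv_iff_rtranclp:
  "contig_equiv K K' f g \<longleftrightarrow> simplicial_map K K' f \<and> (contiguous K K')\<^sup>*\<^sup>* f g"
proof
  assume "contig_equiv K K' f g"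
  then obtain h n where "h 0 = f" "h n = g" "\<forall>i\<le>n. simplicial_map K K' (h i)"
    "\<forall>i<n. contiguous K K' (h i) (h (Suc i))"
    unfolding contig_equiv_def by blast
  then have "(contiguous K K' ^^ n) f g"
    unfolding relpowp_fun_conv by blast
  with \<open>h 0 = f\<close> \<open>\<forall>i\<le>n. simplicial_map K K' (h i)\<close>
  show "simplicial_map K K' f \<and> (contiguous K K')\<^sup>*\<^sup>* f g"
    by (auto dest: relpowp_imp_rtranclp)
next
  assume "simplicial_map K K' f \<and> (contiguous K K')\<^sup>*\<^sup>* f g"
  then have f: "simplicial_map K K' f" and "\<exists>n. (contiguous K K' ^^ n) f g"
    by (auto simp: rtranclp_power)
  then obtain h n where h: "h 0 = f" "h n = g" "\<forall>i<n. contiguous K K' (h i) (h (Suc i))"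
    unfolding relpowp_fun_conv by blast
  have "simplicial_map K K' (h i)" if "i \<le> n" for i
  proof (cases i)
    case (Suc j)
    then show ?thesis using h(3) that unfolding contiguous_def by simp
  qed (use f h(1) in simp)
  then show "contig_equiv K K' f g" using h unfolding contig_equiv_def by blast
qed

lemma contig_equiv_refl: "simplicial_map K K' f \<Longrightarrow> contig_equiv K K' f f"
  by (simp add: contig_equiv_iff_rtranclp)

lemma contig_equiv_if_contiguous: "contiguous K K' f g \<Longrightarrow> contig_equiv K K' f g"
  by (simp add: contig_equiv_iff_rtranclp contiguous_def r_into_rtranclp)

lemma contig_equiv_empty: "contig_equiv {} K' f g"
proof -
  have "contiguous {} K' f g" by (simp add: contiguous_def simplicial_map_def)
  then show ?thesis by (simp add: contig_equiv_iff_rtranclp simplicial_map_def r_into_rtranclp)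
qed

lemma contig_equiv_trans:
  "contig_equiv K K' f g \<Longrightarrow> contig_equiv K K' g k \<Longrightarrow> contig_equiv K K' f k"
  unfolding contig_equiv_iff_rtranclp by (auto intro: rtranclp_trans)

lemma contig_equiv_simplicial_map_right: "contig_equiv K K' f g \<Longrightarrow> simplicial_map K K' g"
  unfolding contig_equiv_iff_rtranclp by (auto elim: rtranclp.cases simp: contiguous_def)

lemma contig_equiv_sym: "contig_equiv K K' f g \<Longrightarrow> contig_equiv K K' g f"
proof -
  assume fg: "contig_equiv K K' f g"
  then have "(contiguous K K')\<^sup>*\<^sup>* f g" by (simp add: contig_equiv_iff_rtranclp)
  then have "(contiguous K K')\<^sup>*\<^sup>* g f"
    by (induction rule: rtranclp_induct) (auto intro: converse_rtranclp_into_rtranclp contiguous_sym)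
  with contig_equiv_simplicial_map_right[OF fg] show ?thesis
    by (simp add: contig_equiv_iff_rtranclp)
qed

lemma contig_equiv_comp:
  assumes "contig_equiv K K' f g" "simplicial_map K' K'' \<psi>"
  shows "contig_equiv K K'' (\<psi> \<circ> f) (\<psi> \<circ> g)"
proof -
  have "(contiguous K K')\<^sup>*\<^sup>* f g" "simplicial_map K K' f"
    using assms(1) unfolding contig_equiv_iff_rtranclp by auto
  then show ?thesis
  proof (induction rule: rtranclp_induct)
    case base
    then show ?case using assms(2) by (intro contig_equiv_refl simplicial_map_comp)
  next
    case (step g k)
    have "contiguous K K'' (\<psi> \<circ> g) (\<psi> \<circ> k)" by (rule contiguous_comp[OF step.hyps(2) assms(2)])
    then show ?case
      by (rule contig_equiv_trans[OF step.IH[OF step.prems] contig_equiv_if_contiguous])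
  qed
qed

lemma contig_equiv_cong:
  assumes "contig_equiv K K' f g"
    and "\<And>v. v \<in> vertices K \<Longrightarrow> f v = f' v" "\<And>v. v \<in> vertices K \<Longrightarrow> g v = g' v"
  shows "contig_equiv K K' f' g'"
proof -
  have fg: "(contiguous K K')\<^sup>*\<^sup>* f g" and f: "simplicial_map K K' f"
    using assms(1) by (auto simp: contig_equiv_iff_rtranclp)
  have f'f: "contiguous K K' f' f"
    by (rule contiguous_sym[OF contiguous_if_agree[OF f assms(2)]])
  have gg': "contiguous K K' g g'"
    by (rule contiguous_if_agree[OF contig_equiv_simplicial_map_right[OF assms(1)] assms(3)])
  have "(contiguous K K')\<^sup>*\<^sup>* f' g'"
    by (rule converse_rtranclp_into_rtranclp[OF f'f
          rtranclp_trans[OF fg r_into_rtranclp[of "contiguous K K'", OF gg']]])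
  moreover have "simplicial_map K K' f'" using f'f by (simp add: contiguous_def)
  ultimately show ?thesis by (simp add: contig_equiv_iff_rtranclp)
qed

lemma contig_equiv_of_chain:
  assumes "\<And>i. contiguous K K' (h i) (h (Suc i))"
  shows "contig_equiv K K' (h 0) (h n)"
proof -
  have "(contiguous K K')\<^sup>*\<^sup>* (h 0) (h n)"
  proof (induction n)
    case (Suc n)
    show ?case by (rule rtranclp_trans[OF Suc.IH r_into_rtranclp[of "contiguous K K'", OF assms]])
  qed simp
  moreover have "simplicial_map K K' (h 0)" using assms[of 0] by (simp add: contiguous_def)
  ultimately show ?thesis by (simp add: contig_equiv_iff_rtranclp)
qed

lemma contig_equiv_chainE:
  assumes "contig_equiv K K' f g"
  obtains h n where "h 0 = f" "\<And>i. i \<ge> n \<Longrightarrow> h i = g" "\<And>i. contiguous K K' (h i) (h (Suc i))"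
proof -
  have "(contiguous K K')\<^sup>*\<^sup>* f g" using assms by (simp add: contig_equiv_iff_rtranclp)
  then obtain n where "(contiguous K K' ^^ n) f g" by (auto simp: rtranclp_power)
  then obtain h where h: "h 0 = f" "h n = g" "\<forall>i<n. contiguous K K' (h i) (h (Suc i))"
    unfolding relpowp_fun_conv by blast
  have start: "h (min 0 n) = f" using h(1) by simp
  have stop: "h (min i n) = g" if "i \<ge> n" for i using h(2) that by (simp add: min_absorb2)
  have "contiguous K K' (h (min i n)) (h (min (Suc i) n))" for i
  proof (cases "i < n")
    case False
    then show ?thesis
      using h(2) contiguous_refl contig_equiv_simplicial_map_right[OF assms] by simp
  qed (use h(3) in simp)
  with start stop show ?thesis by (rule that[of "\<lambda>i. h (min i n)" n])
qed

lemma contig_equiv_const_edge_path: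
  assumes "simplicial_complex K" "simplicial_complex L" "a \<in> vertices L"
    and "(\<lambda>x y. {x, y} \<in> L)\<^sup>*\<^sup>* a b"
  shows "contig_equiv K L (\<lambda>_. a) (\<lambda>_. b)"
  using assms(4)
proof (induction rule: rtranclp_induct)
  case base
  show ?case
  proof (intro contig_equiv_refl simplicial_map_const)
    show "\<sigma> \<noteq> {}" if "\<sigma> \<in> K" for \<sigma> using simplicial_complex_nonempty[OF assms(1) that] .
    show "{a} \<in> L" using simplicial_complex_singleton[OF assms(2,3)] .
  qed
next
  case (step b c)
  have "{b} \<in> L" "{c} \<in> L" by (rule simplicial_complex_face[OF assms(2) step.hyps(2)]; simp)+
  have "contiguous K L (\<lambda>_. b) (\<lambda>_. c)"
    unfolding contiguous_def simplicial_map_def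
  proof (intro conjI ballI)
    fix \<sigma> assume "\<sigma> \<in> K"
    then have "\<sigma> \<noteq> {}" by (rule simplicial_complex_nonempty[OF assms(1)])
    then have "(\<lambda>_. b) ` \<sigma> = {b}" "(\<lambda>_. c) ` \<sigma> = {c}" "(\<lambda>_. b) ` \<sigma> \<union> (\<lambda>_. c) ` \<sigma> = {b, c}"
      by auto
    then show "(\<lambda>_. b) ` \<sigma> \<in> L" "(\<lambda>_. c) ` \<sigma> \<in> L" "(\<lambda>_. b) ` \<sigma> \<union> (\<lambda>_. c) ` \<sigma> \<in> L"
      using \<open>{b} \<in> L\<close> \<open>{c} \<in> L\<close> step.hyps(2) by (simp_all only:)
  qed
  then show ?case by (rule contig_equiv_trans[OF step.IH contig_equiv_if_contiguous])
qed

section \<open>Simplicial paths\<close>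

lemma path_end_eq:
  assumes "\<And>i. i \<ge> m \<Longrightarrow> \<delta> i = \<delta> m"
  shows "path_end \<delta> = \<delta> m"
proof -
  let ?l = "LEAST m. \<forall>i\<ge>m. \<delta> i = \<delta> m"
  have "\<forall>i\<ge>?l. \<delta> i = \<delta> ?l" by (rule LeastI[of _ m]) (use assms in blast)
  moreover have "?l \<le> m" by (rule Least_le) (use assms in blast)
  ultimately have "\<delta> ?l = \<delta> m" by (metis (lifting))
  then show ?thesis unfolding path_end_def .
qed

lemma is_pathE:
  assumes "is_path L \<delta>"
  obtains m where "\<And>i. i \<ge> m \<Longrightarrow> \<delta> i = path_end \<delta>"
proof -
  obtain m where m: "\<forall>i\<ge>m. \<delta> i = \<delta> m" using assms unfolding is_path_def by blast
  then have "path_end \<delta> = \<delta> m" by (intro path_end_eq) blast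
  with m show thesis by (intro that[of m]) metis
qed

lemma eventually_path_end: "is_path L \<delta> \<Longrightarrow> \<forall>\<^sub>F i in sequentially. \<delta> i = path_end \<delta>"
  unfolding eventually_sequentially by (erule is_pathE) blast

lemma path_end_in_vertices:
  assumes "is_path L \<delta>"
  shows "path_end \<delta> \<in> vertices L"
proof -
  obtain m where "\<delta> m = path_end \<delta>" using is_pathE[OF assms] by blast
  then have "path_end \<delta> \<in> {\<delta> m, \<delta> (Suc m)}" by simp
  moreover have "{\<delta> m, \<delta> (Suc m)} \<in> L" using assms by (simp add: is_path_def)
  ultimately show ?thesis unfolding vertices_iff by (rule bexI)
qed

lemma is_path_if_vertex: "\<delta> \<in> vertices (path_complex L) \<Longrightarrow> is_path L \<delta>"
  by (auto simp: vertices_iff path_complex_def)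

lemma contiguous_path_evaluation:
  assumes "simplicial_complex K" "simplicial_complex L" "simplicial_map K (path_complex L) s"
  shows "contiguous K L (\<lambda>v. s v i) (\<lambda>v. s v (Suc i))"
proof -
  have step: "(\<lambda>v. s v j) ` \<sigma> \<union> (\<lambda>v. s v (Suc j)) ` \<sigma> \<in> L" if "\<sigma> \<in> K" for \<sigma> j
  proof -
    have "s ` \<sigma> \<in> path_complex L" using assms(3) that unfolding simplicial_map_def by blast
    then have "(\<Union>\<delta>\<in>s ` \<sigma>. {\<delta> j, \<delta> (Suc j)}) \<in> L" unfolding path_complex_def by blast
    moreover have "(\<Union>\<delta>\<in>s ` \<sigma>. {\<delta> j, \<delta> (Suc j)}) = (\<lambda>v. s v j) ` \<sigma> \<union> (\<lambda>v. s v (Suc j)) ` \<sigma>"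
      by auto
    ultimately show ?thesis by simp
  qed
  have "simplicial_map K L (\<lambda>v. s v j)" for j
    unfolding simplicial_map_def
  proof
    fix \<sigma> assume "\<sigma> \<in> K"
    then show "(\<lambda>v. s v j) ` \<sigma> \<in> L"
      using step simplicial_complex_face[OF assms(2)] simplicial_complex_nonempty[OF assms(1)]
      by (metis Un_upper1 image_is_empty)
  qed
  with step show ?thesis unfolding contiguous_def by blast
qed

lemma contig_equiv_path_family:
  assumes "simplicial_complex K" "simplicial_complex L" "finite (vertices K)"
    and "simplicial_map K (path_complex L) s"
  shows "contig_equiv K L (\<lambda>v. s v 0) (\<lambda>v. path_end (s v))"
proof -
  have "\<forall>v\<in>vertices K. \<forall>\<^sub>F i in sequentially. s v i = path_end (s v)"
    using eventually_path_end is_path_if_vertex simplicial_map_vertex[OF assms(4)] by blast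
  then have "\<forall>\<^sub>F i in sequentially. \<forall>v\<in>vertices K. s v i = path_end (s v)"
    by (rule eventually_ball_finite[OF assms(3)])
  then obtain M where M: "\<And>v. v \<in> vertices K \<Longrightarrow> s v M = path_end (s v)"
    unfolding eventually_sequentially by blast
  have "contig_equiv K L (\<lambda>v. s v 0) (\<lambda>v. s v M)"
    using contig_equiv_of_chain[of K L "\<lambda>i v. s v i"] contiguous_path_evaluation[OF assms(1,2,4)]
    by simp
  then show ?thesis by (rule contig_equiv_cong) (simp_all add: M)
qed

lemma simplicial_map_path_family:
  assumes "simplicial_complex K" "\<And>i. contiguous K L (h i) (h (Suc i))" "\<And>i. i \<ge> n \<Longrightarrow> h i = g"
  shows "simplicial_map K (path_complex L) (\<lambda>v i. h i v)"
  unfolding simplicial_map_def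
proof
  fix \<sigma> assume \<sigma>: "\<sigma> \<in> K"
  have step: "h i ` \<tau> \<union> h (Suc i) ` \<tau> \<in> L" if "\<tau> \<in> K" for i \<tau>
    using assms(2) that unfolding contiguous_def by blast
  have "is_path L (\<lambda>i. h i v)" if "v \<in> \<sigma>" for v
  proof -
    have "{v} \<in> K" using simplicial_complex_face[OF assms(1) \<sigma>] that by blast
    then have "{h i v, h (Suc i) v} \<in> L" for i
      using step[of "{v}" i] by (simp only: image_insert image_empty Un_insert_left Un_empty_left)
    moreover have "\<forall>i\<ge>n. h i v = h n v" by (simp add: assms(3))
    ultimately show ?thesis unfolding is_path_def by blast
  qed
  moreover have "(\<Union>\<delta>\<in>(\<lambda>v i. h i v) ` \<sigma>. {\<delta> i, \<delta> (Suc i)}) = h i ` \<sigma> \<union> h (Suc i) ` \<sigma>" for i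
    by auto
  ultimately show "(\<lambda>v i. h i v) ` \<sigma> \<in> path_complex L"
    using \<sigma> step simplicial_complex_nonempty[OF assms(1)] simplicial_complex_finite[OF assms(1)]
    unfolding path_complex_def by auto
qed

section \<open>Covering numbers\<close>

definition cover_number :: "'a set set \<Rightarrow> ('a set set \<Rightarrow> bool) \<Rightarrow> enat" where
  "cover_number K P = Inf {enat k | k. \<exists>Ks :: nat \<Rightarrow> 'a set set.
       (\<forall>j\<le>k. subcomplex (Ks j) K \<and> P (Ks j)) \<and> K = (\<Union>j\<le>k. Ks j)}"

lemma SD_eq_cover_number: "SD K K' f g = cover_number K (\<lambda>K0. contig_equiv K0 K' f g)"
  by (simp add: SD_def cover_number_def)

lemma schwarz_genus_eq_cover_number:
  "schwarz_genus E B p =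
     cover_number B (\<lambda>B0. \<exists>s. simplicial_map B0 E s \<and> (\<forall>b\<in>vertices B0. p (s b) = b))"
  by (simp add: schwarz_genus_def cover_number_def)

lemma cover_number_empty:
  assumes "P {}"
  shows "cover_number {} P = 0"
proof -
  have "\<exists>Ks :: nat \<Rightarrow> 'a set set. (\<forall>j\<le>0. subcomplex (Ks j) {} \<and> P (Ks j)) \<and> {} = (\<Union>j\<le>0. Ks j)"
    by (rule exI[of _ "\<lambda>_. {}"]) (simp add: assms subcomplex_def simplicial_complex_def)
  then have "cover_number {} P \<le> enat 0" unfolding cover_number_def by (intro Inf_lower) blast
  then show ?thesis by (simp flip: zero_enat_def)
qed

lemma cover_number_mono:
  "(\<And>B. subcomplex B K \<Longrightarrow> P B \<Longrightarrow> Q B) \<Longrightarrow> cover_number K Q \<le> cover_number K P"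
  unfolding cover_number_def by (rule Inf_superset_mono) blast

lemma cover_number_pullback:
  fixes K :: "'a set set" and K' :: "'b set set"
  assumes "simplicial_complex K" "simplicial_map K K' f"
    and "\<And>B. subcomplex B K' \<Longrightarrow> P' B \<Longrightarrow> P {\<sigma> \<in> K. f ` \<sigma> \<in> B}"
  shows "cover_number K P \<le> cover_number K' P'"
  unfolding cover_number_def
proof (rule Inf_superset_mono, rule subsetI)
  fix e assume "e \<in> {enat k | k. \<exists>Bs :: nat \<Rightarrow> 'b set set.
       (\<forall>j\<le>k. subcomplex (Bs j) K' \<and> P' (Bs j)) \<and> K' = (\<Union>j\<le>k. Bs j)}"
  then obtain k Bs where e: "e = enat k"
    and Bs: "\<forall>j\<le>k. subcomplex (Bs j) K' \<and> P' (Bs j)" and cov: "K' = (\<Union>j\<le>k. Bs j)"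
    by blast
  define As where "As j = {\<sigma> \<in> K. f ` \<sigma> \<in> Bs j}" for j
  have "\<forall>j\<le>k. subcomplex (As j) K \<and> P (As j)"
    using Bs assms(3) subcomplex_preimage[OF assms(1)] unfolding As_def by blast
  moreover have "K = (\<Union>j\<le>k. As j)"
    using assms(2) cov unfolding As_def simplicial_map_def by blast
  ultimately show "e \<in> {enat k | k. \<exists>Ks :: nat \<Rightarrow> 'a set set.
       (\<forall>j\<le>k. subcomplex (Ks j) K \<and> P (Ks j)) \<and> K = (\<Union>j\<le>k. Ks j)}"
    using e by blast
qed

lemma SD_comp_le:
  assumes "simplicial_map K' K'' \<psi>"
  shows "SD K K'' (\<psi> \<circ> f) (\<psi> \<circ> g) \<le> SD K K' f g"
  unfolding SD_eq_cover_number by (rule cover_number_mono) (rule contig_equiv_comp[OF _ assms])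

lemma scat_map_le_scat:
  assumes "simplicial_map L L' \<phi>"
  shows "scat_map L L' \<phi> \<le> scat L"
  using SD_comp_le[OF assms, of L id "\<lambda>_. base_vertex L"] by (simp add: scat_map_def scat_def)

lemma TC_le_scat_prod:
  assumes "complex L"
  shows "TC L \<le> scat (L \<times>\<^sub>S L)"
proof (cases "L = {}")
  case True
  then have "L \<times>\<^sub>S L = {}" by (simp add: prod_complex_def)
  with True show ?thesis by (simp add: TC_def SD_eq_cover_number cover_number_empty contig_equiv_empty)
next
  case False
  have L: "simplicial_complex L" and conn: "edge_connected L"
    using assms by (simp_all add: complex_def)
  obtain v w where vw: "base_vertex (L \<times>\<^sub>S L) = (v, w)" by (cases "base_vertex (L \<times>\<^sub>S L)")
  have "vertices (L \<times>\<^sub>S L) \<noteq> {}"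
    using vertices_prod_complex[OF L L] vertices_nonempty[OF L False] by simp
  then have "(v, w) \<in> vertices L \<times> vertices L"
    using base_vertex_in_vertices vw vertices_prod_complex[OF L L] by metis
  then have v: "v \<in> vertices L" and w: "w \<in> vertices L" by auto
  have path: "(\<lambda>x y. {x, y} \<in> L)\<^sup>*\<^sup>* v w" using conn v w unfolding edge_connected_def by blast
  show ?thesis unfolding TC_def scat_def SD_eq_cover_number
  proof (rule cover_number_mono)
    fix B assume B: "subcomplex B (L \<times>\<^sub>S L)"
      and c: "contig_equiv B (L \<times>\<^sub>S L) id (\<lambda>_. base_vertex (L \<times>\<^sub>S L))"
    have "contig_equiv B L fst (\<lambda>_. v)"
      using contig_equiv_comp[OF c simplicial_map_fst] vw by (simp add: o_def)
    moreover have "contig_equiv B L (\<lambda>_. v) (\<lambda>_. w)"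
      using B by (intro contig_equiv_const_edge_path[OF _ L v path]) (simp add: subcomplex_def)
    moreover have "contig_equiv B L (\<lambda>_. w) snd"
      using contig_equiv_sym[OF contig_equiv_comp[OF c simplicial_map_snd]] vw by (simp add: o_def)
    ultimately show "contig_equiv B L fst snd" by (rule contig_equiv_trans[OF contig_equiv_trans])
  qed
qed

lemma contig_equiv_const_if_section:
  assumes L: "simplicial_complex L" "finite (vertices L)"
    and \<phi>: "inj_on \<phi> (vertices L)" and v0: "v0 \<in> vertices L"
    and A: "subcomplex A L" and \<iota>: "simplicial_map A B (\<lambda>x. (x, \<phi> v0))"
    and s: "simplicial_map B (path_complex L) s"
    and sect: "\<And>b. b \<in> vertices B \<Longrightarrow> pi_map \<phi> (s b) = b"
  shows "contig_equiv A L id (\<lambda>_. v0)"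
proof -
  let ?\<iota> = "\<lambda>x. (x, \<phi> v0)"
  have scA: "simplicial_complex A" and "finite (vertices A)"
    using A vertices_mono[of A L] finite_subset L(2) by (auto simp: subcomplex_def)
  then have "contig_equiv A L (\<lambda>x. (s \<circ> ?\<iota>) x 0) (\<lambda>x. path_end ((s \<circ> ?\<iota>) x))"
    by (intro contig_equiv_path_family[OF scA L(1)] simplicial_map_comp[OF \<iota> s])
  then show ?thesis
  proof (rule contig_equiv_cong)
    fix x assume "x \<in> vertices A"
    then have x: "?\<iota> x \<in> vertices B" by (rule simplicial_map_vertex[OF \<iota>])
    then have start: "s (x, \<phi> v0) 0 = x" and stop: "\<phi> (path_end (s (x, \<phi> v0))) = \<phi> v0"
      using sect[OF x] by (simp_all add: pi_map_def)
    have "is_path L (s (x, \<phi> v0))"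
      by (rule is_path_if_vertex[OF simplicial_map_vertex[OF s x]])
    then have "path_end (s (x, \<phi> v0)) = v0"
      using inj_onD[OF \<phi> stop] path_end_in_vertices v0 by blast
    with start show "(\<lambda>x. (s \<circ> ?\<iota>) x 0) x = id x" and "(\<lambda>x. path_end ((s \<circ> ?\<iota>) x)) x = v0"
      by simp_all
  qed
qed

lemma scat_le_TC_map:
  assumes L: "simplicial_complex L" "finite (vertices L)"
    and \<phi>: "simplicial_map L L' \<phi>" "inj_on \<phi> (vertices L)"
  shows "scat L \<le> TC_map L L' \<phi>"
proof (cases "L = {}")
  case True
  then show ?thesis by (simp add: scat_def SD_eq_cover_number cover_number_empty contig_equiv_empty)
next
  case False
  define v0 where "v0 = base_vertex L"
  have v0: "v0 \<in> vertices L"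
    unfolding v0_def using vertices_nonempty[OF L(1) False] by (rule base_vertex_in_vertices)
  let ?\<iota> = "\<lambda>x. (x, \<phi> v0)"
  have "{\<phi> v0} \<in> L'"
    using \<phi>(1) simplicial_complex_singleton[OF L(1) v0] unfolding simplicial_map_def by force
  then have "simplicial_map L L' (\<lambda>_. \<phi> v0)"
    by (intro simplicial_map_const) (rule simplicial_complex_nonempty[OF L(1)])
  then have \<iota>: "simplicial_map L (L \<times>\<^sub>S L') ?\<iota>"
    by (rule simplicial_map_pair[OF L(1) simplicial_map_id[unfolded id_def]])
  show ?thesis unfolding scat_def TC_map_def SD_eq_cover_number schwarz_genus_eq_cover_number
  proof (rule cover_number_pullback[OF L(1) \<iota>])
    fix B assume B: "subcomplex B (L \<times>\<^sub>S L')"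
      and "\<exists>s. simplicial_map B (path_complex L) s \<and> (\<forall>b\<in>vertices B. pi_map \<phi> (s b) = b)"
    then obtain s where "simplicial_map B (path_complex L) s"
      and "\<And>b. b \<in> vertices B \<Longrightarrow> pi_map \<phi> (s b) = b" by blast
    moreover have "subcomplex {\<sigma> \<in> L. ?\<iota> ` \<sigma> \<in> B} L" by (rule subcomplex_preimage[OF L(1) B])
    moreover have "simplicial_map {\<sigma> \<in> L. ?\<iota> ` \<sigma> \<in> B} B ?\<iota>" by (simp add: simplicial_map_def)
    ultimately show "contig_equiv {\<sigma> \<in> L. ?\<iota> ` \<sigma> \<in> B} L id (\<lambda>_. base_vertex L)"
      unfolding v0_def[symmetric] by (intro contig_equiv_const_if_section[OF L \<phi>(2) v0])
  qed
qed

lemma TC_map_le_TC: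
  assumes L: "simplicial_complex L" "simplicial_complex L'"
    and \<psi>: "simplicial_map L' L \<psi>" "\<And>y. y \<in> vertices L' \<Longrightarrow> \<phi> (\<psi> y) = y"
  shows "TC_map L L' \<phi> \<le> TC L"
proof -
  let ?T = "\<lambda>x. (fst x, \<psi> (snd x))"
  have T: "simplicial_map (L \<times>\<^sub>S L') (L \<times>\<^sub>S L) ?T"
    using simplicial_map_pair[OF simplicial_complex_prod[OF L] simplicial_map_fst
        simplicial_map_comp[OF simplicial_map_snd \<psi>(1)]]
    by (simp add: o_def)
  show ?thesis unfolding TC_map_def TC_def SD_eq_cover_number schwarz_genus_eq_cover_number
  proof (rule cover_number_pullback[OF simplicial_complex_prod[OF L] T])
    fix B assume B: "subcomplex B (L \<times>\<^sub>S L)" and "contig_equiv B L fst snd"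
    then obtain h n where h: "h 0 = fst" "\<And>i. i \<ge> n \<Longrightarrow> h i = snd"
      "\<And>i. contiguous B L (h i) (h (Suc i))"
      by (elim contig_equiv_chainE) blast
    let ?A = "{\<tau> \<in> L \<times>\<^sub>S L'. ?T ` \<tau> \<in> B}"
    let ?s = "\<lambda>b i. h i (?T b)"
    have "simplicial_map ?A B ?T" by (simp add: simplicial_map_def)
    moreover have "simplicial_map B (path_complex L) (\<lambda>v i. h i v)"
      using B h(2,3) by (intro simplicial_map_path_family) (auto simp: subcomplex_def)
    ultimately have "simplicial_map ?A (path_complex L) ((\<lambda>v i. h i v) \<circ> ?T)"
      by (rule simplicial_map_comp)
    then have "simplicial_map ?A (path_complex L) ?s" by (simp add: o_def)
    moreover have "pi_map \<phi> (?s b) = b" if "b \<in> vertices ?A" for b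
    proof -
      have "b \<in> vertices (L \<times>\<^sub>S L')" by (rule subsetD[OF vertices_mono that]) blast
      then have "snd b \<in> vertices L'" unfolding vertices_prod_complex[OF L] by (simp add: mem_Times_iff)
      moreover have "path_end (?s b) = ?s b n" by (rule path_end_eq) (simp add: h(2))
      ultimately show ?thesis using h(1,2) \<psi>(2) by (simp add: pi_map_def)
    qed
    ultimately show "\<exists>s. simplicial_map ?A (path_complex L) s \<and> (\<forall>b\<in>vertices ?A. pi_map \<phi> (s b) = b)"
      by blast
  qed
qed

section \<open>The inverse of a bijective finite-fibration\<close>

definition full_simplex :: "nat \<Rightarrow> nat set set" where
  "full_simplex k = {\<rho>. \<rho> \<noteq> {} \<and> \<rho> \<subseteq> {..<k}}"

lemma vertices_full_simplex: "vertices (full_simplex k) = {..<k}"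
  unfolding vertices_def full_simplex_def by auto

lemma finite_complex_full_simplex: "finite_complex (full_simplex k)"
proof -
  have "simplicial_complex (full_simplex k)"
    unfolding simplicial_complex_def full_simplex_def by (auto intro: finite_subset)
  moreover have "edge_connected (full_simplex k)"
    unfolding edge_connected_def vertices_full_simplex
  proof (intro ballI)
    fix a b assume "a \<in> {..<k}" "b \<in> {..<k}"
    then have "{a, b} \<in> full_simplex k" by (simp add: full_simplex_def)
    then show "(\<lambda>x y. {x, y} \<in> full_simplex k)\<^sup>*\<^sup>* a b" by (rule r_into_rtranclp)
  qed
  ultimately show ?thesis by (simp add: finite_complex_def complex_def vertices_full_simplex)
qed

lemma full_simplex_times_interval_top:
  assumes "k \<noteq> 0"
  shows "{..<k} \<times> {1} \<in> full_simplex k \<times>\<^sub>S interval_complex 1"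
proof -
  have "{..<k} \<noteq> {}" using assms by auto
  moreover have "{1} \<in> interval_complex 1" unfolding interval_complex_def by blast
  ultimately show ?thesis by (simp add: prod_complex_def full_simplex_def)
qed

lemma snd_vertex_prod_singleton: "x \<in> vertices (K \<times>\<^sub>S {{a}}) \<Longrightarrow> snd x = a"
  unfolding vertices_iff prod_complex_def by force

lemma finite_fibration_lifts_simplex:
  assumes fib: "finite_fibration L L' \<phi>" and L: "simplicial_complex L" "simplicial_complex L'"
    and \<sigma>': "\<sigma>' \<in> L'" and v: "v \<in> vertices L" "\<phi> v \<in> \<sigma>'"
  obtains \<sigma> where "\<sigma> \<in> L" "\<phi> ` \<sigma> = \<sigma>'"
proof -
  obtain k :: nat and e where e: "\<sigma>' = e ` {..<k}"
    using simplicial_complex_finite[OF L(2) \<sigma>'] unfolding finite_conv_nat_seg_image lessThan_def by blast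
  have "k \<noteq> 0" using v(2) e by auto
  let ?N = "full_simplex k" and ?I = "interval_complex 1"
  \<comment> \<open>G starts at the single point \<open>\<phi> v\<close>, which lifts to v, and moves in one step onto \<open>\<sigma>'\<close>;
     the lift at time 1 is then a simplex of L over \<open>\<sigma>'\<close>.\<close>
  define G :: "nat \<times> nat \<Rightarrow> 'b" where "G x = (if snd x = 0 then \<phi> v else e (fst x))" for x
  have g: "simplicial_map (?N \<times>\<^sub>S {{0::nat}}) L (\<lambda>_. v)"
  proof (rule simplicial_map_const)
    show "\<tau> \<noteq> {}" if "\<tau> \<in> ?N \<times>\<^sub>S {{0::nat}}" for \<tau> using that by (simp add: prod_complex_def)
    show "{v} \<in> L" by (rule simplicial_complex_singleton[OF L(1) v(1)])
  qed
  have G: "simplicial_map (?N \<times>\<^sub>S ?I) L' G"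
    unfolding simplicial_map_def
  proof
    fix \<tau> assume "\<tau> \<in> ?N \<times>\<^sub>S ?I"
    then have "\<tau> \<noteq> {}" "fst ` \<tau> \<subseteq> {..<k}" by (auto simp: prod_complex_def full_simplex_def)
    then have "G ` \<tau> \<subseteq> \<sigma>'" "G ` \<tau> \<noteq> {}" using v(2) e by (auto simp: G_def)
    then show "G ` \<tau> \<in> L'" by (intro simplicial_complex_face[OF L(2) \<sigma>'])
  qed
  have agree: "\<forall>x\<in>vertices (?N \<times>\<^sub>S {{0::nat}}). \<phi> ((\<lambda>_. v) x) = G x"
    by (auto simp: G_def dest: snd_vertex_prod_singleton)
  have "finite_complex ?N \<and> (1::nat) \<ge> 1 \<and> simplicial_map (?N \<times>\<^sub>S {{0::nat}}) L (\<lambda>_. v) \<and>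
      simplicial_map (?N \<times>\<^sub>S ?I) L' G \<and> (\<forall>x\<in>vertices (?N \<times>\<^sub>S {{0::nat}}). \<phi> ((\<lambda>_. v) x) = G x)"
    using finite_complex_full_simplex g G agree by simp
  then obtain Gt where Gt: "simplicial_map (?N \<times>\<^sub>S ?I) L Gt"
    "\<forall>x\<in>vertices (?N \<times>\<^sub>S ?I). \<phi> (Gt x) = G x"
    using fib unfolding finite_fibration_def by blast
  let ?\<tau> = "{..<k} \<times> {1::nat}"
  have \<tau>: "?\<tau> \<in> ?N \<times>\<^sub>S ?I" using \<open>k \<noteq> 0\<close> by (rule full_simplex_times_interval_top)
  have "\<phi> (Gt x) = e (fst x)" if x: "x \<in> ?\<tau>" for x
  proof -
    have "x \<in> vertices (?N \<times>\<^sub>S ?I)" unfolding vertices_iff by (rule bexI[of "\<lambda>\<sigma>. x \<in> \<sigma>", OF x \<tau>])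
    moreover have "snd x = 1" using x by auto
    ultimately show ?thesis using Gt(2) by (simp add: G_def)
  qed
  then have "\<phi> ` Gt ` ?\<tau> = e ` fst ` ?\<tau>" unfolding image_image by (rule image_cong[OF refl])
  also have "\<dots> = \<sigma>'" using e by simp
  finally have "\<phi> ` Gt ` ?\<tau> = \<sigma>'" .
  moreover have "Gt ` ?\<tau> \<in> L" using Gt(1) \<tau> unfolding simplicial_map_def by blast
  ultimately show thesis by (intro that)
qed

lemma simplicial_map_inv_into_finite_fibration:
  assumes fib: "finite_fibration L L' \<phi>" and L: "simplicial_complex L" "simplicial_complex L'"
    and bij: "bij_betw \<phi> (vertices L) (vertices L')"
  shows "simplicial_map L' L (inv_into (vertices L) \<phi>)"
  unfolding simplicial_map_def
proof
  fix \<sigma>' assume \<sigma>': "\<sigma>' \<in> L'"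
  obtain y where y: "y \<in> \<sigma>'" using simplicial_complex_nonempty[OF L(2) \<sigma>'] by blast
  then have "y \<in> vertices L'" using simplex_subset_vertices[OF \<sigma>'] by blast
  then have "inv_into (vertices L) \<phi> y \<in> vertices L" "\<phi> (inv_into (vertices L) \<phi> y) \<in> \<sigma>'"
    using bij y by (simp_all add: bij_betw_def inv_into_into f_inv_into_f)
  then obtain \<sigma> where \<sigma>: "\<sigma> \<in> L" "\<phi> ` \<sigma> = \<sigma>'"
    by (rule finite_fibration_lifts_simplex[OF fib L \<sigma>'])
  have "inv_into (vertices L) \<phi> ` \<sigma>' = \<sigma>"
    using \<sigma> bij simplex_subset_vertices[OF \<sigma>(1)] by (auto simp: bij_betw_def)
  with \<sigma>(1) show "inv_into (vertices L) \<phi> ` \<sigma>' \<in> L" by simp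
qed

theorem corollary6p5:
  fixes L :: "'a set set" and L' :: "'b set set" and \<phi> :: "'a \<Rightarrow> 'b"
  assumes "finite_complex L" and "finite_complex L'"
    and "simplicial_map L L' \<phi>"
    and "bij_betw \<phi> (vertices L) (vertices L')"
    and "finite_fibration L L' \<phi>"
  shows "scat_map L L' \<phi> \<le> scat L \<and> scat L \<le> TC_map L L' \<phi> \<and>
         TC_map L L' \<phi> \<le> TC L \<and> TC L \<le> scat (L \<times>\<^sub>S L)"
proof (intro conjI)
  have L: "simplicial_complex L" "finite (vertices L)" and L': "simplicial_complex L'"
    using assms(1,2) by (simp_all add: finite_complex_def complex_def)
  show "scat_map L L' \<phi> \<le> scat L" by (rule scat_map_le_scat[OF assms(3)])
  show "scat L \<le> TC_map L L' \<phi>"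
    by (rule scat_le_TC_map[OF L assms(3) bij_betw_imp_inj_on[OF assms(4)]])
  show "TC_map L L' \<phi> \<le> TC L"
  proof (rule TC_map_le_TC[OF L(1) L'])
    show "simplicial_map L' L (inv_into (vertices L) \<phi>)"
      by (rule simplicial_map_inv_into_finite_fibration[OF assms(5) L(1) L' assms(4)])
    show "\<phi> (inv_into (vertices L) \<phi> y) = y" if "y \<in> vertices L'" for y
      by (rule bij_betw_inv_into_right[OF assms(4) that])
  qed
  show "TC L \<le> scat (L \<times>\<^sub>S L)"
    using assms(1) by (intro TC_le_scat_prod) (simp add: finite_complex_def)
qed

end
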